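(* At a long-run equilibrium under perimeter control of the monocentric city model described in the context, in which the downtown area and the suburban interval $[0,x_f]$ are occupied with positive land rent (and $r_s(x_f)=0$ at the city boundary $x_f$): (i) $$N_d^{p*}=\frac{1}{\mu}\{y_d\}^{\frac{1-\mu}{\mu}}\left(w-C_s^{bp*}\right)^{-\frac1\mu}\left(r_s(0)+r_A\right)A_d,$$ $$N_s^{p*}(x)=\frac{1}{\mu}\{w-C_s^{bp*}-\alpha\tau x\}^{\frac{1-\mu}{\mu}}\left(w-C_s^{bp*}\right)^{-\frac1\mu}\left(r_s(0)+r_A\right)A_s(x);$$ (ii) $$x_f=\frac{w-C_s^{bp*}}{\alpha\tau}\left(\{r_A\}^{-\mu}-\{r_s(0)+r_A\}^{-\mu}\right)\{r_A\}^{\mu};$$ (iii) $r_s(0)$ is determined by $\int_0^{x_f}N_s^{p*}(x)\,dx=N-N_d^{p*}$.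
   Context: Monocentric city: downtown land $A_d>0$ (all jobs) and suburban locations $x\ge0$ with land $A_s(x)>0$; absentee landlords; $N$ homogeneous commuters ($N_d$ downtown, density $N_s(x)$ at $x$). Downtown commuting cost $\alpha T_d$; under perimeter control a suburban commuter at $x$ has commuting cost $C_s^{bp*}+\alpha\tau x$, where $C_s^{bp*}$ is the short-run equilibrium bathtub cost of downtown car traffic under perimeter control, $\alpha>0$ the value of time, $\tau=1/v_f$. Income $w$; utility $z^{1-\mu}a^{\mu}$, $\mu\in(0,1)$; budget $w=z+(r+r_A)a+C$, agricultural rent $r_A>0$, downtown rent $r_d+r_A$, rent $r_s(x)+r_A$ at $x$. Net incomes $y_d=w-\alpha T_d$, $y_s^p(x)=w-C_s^{bp*}-\alpha\tau x$; lot sizes $a=\mu y/(r+r_A)$; indirect utility $U=(1-\mu)^{1-\mu}\mu^\mu y(r+r_A)^{-\mu}$. Long-run equilibrium (utility $U^*$): $U_d=U^*$ if $N_d>0$ ($\le$ otherwise); $U_s(x)=U^*$ if $N_s(x)>0$ ($\le$ otherwise); land clearing $a_dN_d=A_d$ if $r_d>0$ ($\le$ if $r_d=0$), $a_s(x)N_s(x)=A_s(x)$ if $r_s(x)>0$ ($\le$ if $r_s(x)=0$); $N_d+\int_0^\infty N_s(x)dx=N$. *)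

theory Defs
  imports "HOL-Analysis.Analysis"
begin

text \<open>Indirect utility for net income y and gross land rent R = r + r_A.\<close>
definition indirect_utility :: "real \<Rightarrow> real \<Rightarrow> real \<Rightarrow> real" where
  "indirect_utility mu y R = (1 - mu) powr (1 - mu) * mu powr mu * y * R powr (- mu)"

definition lot_size :: "real \<Rightarrow> real \<Rightarrow> real \<Rightarrow> real" where
  "lot_size mu y R = mu * y / R"

definition y_down :: "real \<Rightarrow> real \<Rightarrow> real \<Rightarrow> real" where
  "y_down w alpha Td = w - alpha * Td"

definition y_sub :: "real \<Rightarrow> real \<Rightarrow> real \<Rightarrow> real \<Rightarrow> real \<Rightarrow> real" where
  "y_sub w Cs alpha tau x = w - Cs - alpha * tau * x"

text \<open>Long-run equilibrium under perimeter control (utility level Ustar).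
  Ns and rs are the suburban population density and (net) land rent, defined on x \<ge> 0.\<close>
definition lr_equilibrium_pc ::
  "real \<Rightarrow> real \<Rightarrow> real \<Rightarrow> real \<Rightarrow> real \<Rightarrow> real \<Rightarrow> real \<Rightarrow> real \<Rightarrow> (real \<Rightarrow> real)
   \<Rightarrow> real \<Rightarrow> real \<Rightarrow> (real \<Rightarrow> real) \<Rightarrow> real \<Rightarrow> (real \<Rightarrow> real) \<Rightarrow> real \<Rightarrow> bool" where
  "lr_equilibrium_pc mu alpha tau w Cs Td rA Ad As N Nd Ns rd rs Ustar \<longleftrightarrow>
     Nd \<ge> 0 \<and> rd \<ge> 0 \<and> (\<forall>x\<ge>0. Ns x \<ge> 0 \<and> rs x \<ge> 0) \<and>
     \<comment> \<open>utility conditions, downtown\<close>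
     indirect_utility mu (y_down w alpha Td) (rd + rA) \<le> Ustar \<and>
     (Nd > 0 \<longrightarrow> indirect_utility mu (y_down w alpha Td) (rd + rA) = Ustar) \<and>
     \<comment> \<open>utility conditions, suburbs\<close>
     (\<forall>x\<ge>0. indirect_utility mu (y_sub w Cs alpha tau x) (rs x + rA) \<le> Ustar \<and>
        (Ns x > 0 \<longrightarrow> indirect_utility mu (y_sub w Cs alpha tau x) (rs x + rA) = Ustar)) \<and>
     \<comment> \<open>land clearing, downtown\<close>
     (rd > 0 \<longrightarrow> lot_size mu (y_down w alpha Td) (rd + rA) * Nd = Ad) \<and>
     (rd = 0 \<longrightarrow> lot_size mu (y_down w alpha Td) (rd + rA) * Nd \<le> Ad) \<and>
     \<comment> \<open>land clearing, suburbs\<close>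
     (\<forall>x\<ge>0. (rs x > 0 \<longrightarrow> lot_size mu (y_sub w Cs alpha tau x) (rs x + rA) * Ns x = As x) \<and>
        (rs x = 0 \<longrightarrow> lot_size mu (y_sub w Cs alpha tau x) (rs x + rA) * Ns x \<le> As x)) \<and>
     \<comment> \<open>population constraint N_d + int_0^infty N_s = N\<close>
     (Ns has_integral (N - Nd)) {0..}"

end

theory Submission
  imports Defs
begin

text \<open>Indirect utility is proportional to \<open>y R powr (- mu)\<close>, so equal utility at all
  occupied locations fixes the gross rent \<open>R = (y / y0) powr (1 / mu) * R0\<close> relative to the
  centre, where \<open>y0 = w - Cs\<close> and \<open>R0 = rs 0 + rA\<close>; land clearing turns this into the
  density \<open>A R / (mu y)\<close>, which is (i). At the boundary the gross rent is \<open>rA\<close> and the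
  utility equation is linear in \<open>xf\<close>, giving (ii). Since \<open>Ns\<close> vanishes beyond \<open>xf\<close> and
  agrees with (i) on \<open>[0, xf)\<close>, the population constraint becomes (iii).\<close>

lemma indirect_utility_eq_iff:
  assumes "0 < mu" "mu < 1"
  shows "indirect_utility mu y R = indirect_utility mu y' R' \<longleftrightarrow>
    y * R powr (- mu) = y' * R' powr (- mu)"
proof -
  have "(1 - mu) powr (1 - mu) * mu powr mu > 0" using assms by simp
  then show ?thesis using assms unfolding indirect_utility_def by (simp add: mult.assoc)
qed

lemma income_pos_of_lot_size:
  assumes "0 < mu" "0 < R" "0 \<le> N" "0 < A" "lot_size mu y R * N = A"
  shows "0 < y"
proof (rule ccontr)
  assume "\<not> 0 < y"
  then have "lot_size mu y R \<le> 0"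
    using assms(1,2) unfolding lot_size_def by (simp add: divide_nonpos_pos mult_nonneg_nonpos)
  then have "lot_size mu y R * N \<le> 0" using assms(3) by (simp add: mult_nonpos_nonneg)
  then show False using assms(4,5) by simp
qed

lemma gross_rent_of_equal_utility:
  fixes mu y y0 R R0 :: real
  assumes "0 < mu" "0 < y" "0 < y0" "0 < R" "0 < R0"
    and "y * R powr (- mu) = y0 * R0 powr (- mu)"
  shows "R = y powr (1 / mu) * y0 powr (- 1 / mu) * R0"
proof -
  have "R powr (- mu) = (y0 / y) * R0 powr (- mu)"
    using assms(2,6) by (simp add: field_simps)
  then have "(R powr (- mu)) powr (- 1 / mu) = ((y0 / y) * R0 powr (- mu)) powr (- 1 / mu)"
    by simp
  also have "\<dots> = (y0 / y) powr (- 1 / mu) * (R0 powr (- mu)) powr (- 1 / mu)"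
    using assms(2,3) by (intro powr_mult)
  also have "\<dots> = y powr (1 / mu) * y0 powr (- 1 / mu) * R0"
    using assms(1-3,5) by (simp add: powr_powr powr_divide powr_minus_divide field_simps)
  finally show ?thesis using assms(1,4) by (simp add: powr_powr)
qed

lemma population_of_equal_utility:
  fixes mu y y0 R R0 A N :: real
  assumes "0 < mu" "mu < 1" "0 < y0" "0 < R" "0 < R0"
    and U: "indirect_utility mu y R = indirect_utility mu y0 R0"
    and L: "lot_size mu y R * N = A"
  shows "N = (1 / mu) * y powr ((1 - mu) / mu) * y0 powr (- 1 / mu) * R0 * A"
proof -
  have e: "y * R powr (- mu) = y0 * R0 powr (- mu)"
    using U indirect_utility_eq_iff[OF assms(1,2)] by blast
  have "0 < y * R powr (- mu)" unfolding e using assms(3,5) by simp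
  then have y: "0 < y" using assms(4) by (simp add: zero_less_mult_iff)
  have N: "N = A * R / (mu * y)" using L assms(1,4) y unfolding lot_size_def by (simp add: field_simps)
  have "y powr (1 / mu) / y = y powr ((1 - mu) / mu)"
    using assms(1) y by (simp add: powr_diff diff_divide_distrib)
  then show ?thesis
    unfolding N gross_rent_of_equal_utility[OF assms(1) y assms(3-5) e]
    using assms(1) y by (simp add: field_simps)
qed

lemma boundary_of_equal_utility:
  fixes c y0 x R0 rA mu :: real
  assumes "0 < c" "0 < rA"
    and "(y0 - c * x) * rA powr (- mu) = y0 * R0 powr (- mu)"
  shows "x = y0 / c * (rA powr (- mu) - R0 powr (- mu)) * rA powr mu"
proof -
  have inv: "rA powr (- mu) * rA powr mu = 1" using assms(2) by (simp add: powr_add[symmetric])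
  have "y0 - c * x = y0 * R0 powr (- mu) * rA powr mu"
    using assms(3) inv by (metis mult.assoc mult.right_neutral)
  then have "c * x = y0 * (rA powr (- mu) - R0 powr (- mu)) * rA powr mu"
    using inv by (simp add: algebra_simps)
  then show ?thesis using assms(1) by (simp add: field_simps)
qed

lemma has_integral_atLeastAtMost_of_vanishing:
  fixes f :: "real \<Rightarrow> 'a::banach"
  assumes "(f has_integral I) {a..}" and "\<forall>x>b. f x = 0"
  shows "(f has_integral I) {a..b}"
proof -
  have "{x \<in> {a..b} - {a..}. f x \<noteq> 0} = {}" "{x \<in> {a..} - {a..b}. f x \<noteq> 0} = {}"
    using assms(2) by (auto simp: not_less[symmetric])
  then have "negligible {x \<in> {a..b} - {a..}. f x \<noteq> 0}" "negligible {x \<in> {a..} - {a..b}. f x \<noteq> 0}"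
    by (simp_all only: negligible_empty)
  from has_integral_spike_set_eq[OF this] show ?thesis using assms(1) by blast
qed

lemma lr_equilibrium_pcD:
  assumes "lr_equilibrium_pc mu alpha tau w Cs Td rA Ad As N Nd Ns rd rs Ustar"
  shows "0 < Nd \<Longrightarrow> indirect_utility mu (y_down w alpha Td) (rd + rA) = Ustar"
    and "0 < rd \<Longrightarrow> lot_size mu (y_down w alpha Td) (rd + rA) * Nd = Ad"
    and "0 \<le> x \<Longrightarrow> 0 < Ns x \<Longrightarrow>
      indirect_utility mu (y_sub w Cs alpha tau x) (rs x + rA) = Ustar"
    and "0 \<le> x \<Longrightarrow> 0 < rs x \<Longrightarrow>
      lot_size mu (y_sub w Cs alpha tau x) (rs x + rA) * Ns x = As x"
    and "(Ns has_integral (N - Nd)) {0..}"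
  using assms unfolding lr_equilibrium_pc_def by simp_all

theorem lemma5:
  fixes mu alpha tau w Cs Td rA Ad N Nd rd Ustar xf :: real
    and As Ns rs :: "real \<Rightarrow> real"
  assumes mu: "0 < mu" "mu < 1"
    and alpha: "alpha > 0" and tau: "tau > 0" and rA: "rA > 0"
    and Ad: "Ad > 0" and As: "\<forall>x\<ge>0. As x > 0"
    and eq: "lr_equilibrium_pc mu alpha tau w Cs Td rA Ad As N Nd Ns rd rs Ustar"
    and down_occ: "Nd > 0" "rd > 0"
    and xf: "xf > 0"
    and sub_occ: "\<forall>x\<in>{0..xf}. Ns x > 0"
    and sub_rent: "\<forall>x\<in>{0..<xf}. rs x > 0"
    and boundary: "rs xf = 0"
    and beyond: "\<forall>x>xf. Ns x = 0"
  shows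
    "(Nd = (1 / mu) * (w - alpha * Td) powr ((1 - mu) / mu) * (w - Cs) powr (- 1 / mu)
            * (rs 0 + rA) * Ad) \<and>
    (\<forall>x\<in>{0..<xf}. Ns x = (1 / mu) * (w - Cs - alpha * tau * x) powr ((1 - mu) / mu)
            * (w - Cs) powr (- 1 / mu) * (rs 0 + rA) * As x) \<and>
    xf = (w - Cs) / (alpha * tau) * (rA powr (- mu) - (rs 0 + rA) powr (- mu)) * rA powr mu \<and>
    ((\<lambda>x. (1 / mu) * (w - Cs - alpha * tau * x) powr ((1 - mu) / mu)
            * (w - Cs) powr (- 1 / mu) * (rs 0 + rA) * As x) has_integral
       (N - (1 / mu) * (w - alpha * Td) powr ((1 - mu) / mu) * (w - Cs) powr (- 1 / mu)
            * (rs 0 + rA) * Ad)) {0..xf}"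
proof -
  note equilibrium = lr_equilibrium_pcD[OF eq, unfolded y_down_def y_sub_def]
  let ?y0 = "w - Cs" and ?R0 = "rs 0 + rA"
  let ?n = "\<lambda>x. (1 / mu) * (?y0 - alpha * tau * x) powr ((1 - mu) / mu)
    * ?y0 powr (- 1 / mu) * ?R0 * As x"
  have U_sub: "indirect_utility mu (?y0 - alpha * tau * x) (rs x + rA) = Ustar"
    if "x \<in> {0..xf}" for x using equilibrium(3) sub_occ that by simp
  have L_sub: "lot_size mu (?y0 - alpha * tau * x) (rs x + rA) * Ns x = As x"
    and R_sub: "0 < rs x + rA" if "x \<in> {0..<xf}" for x
    using equilibrium(4) sub_rent rA that by (simp_all add: add_pos_pos)
  have "0 \<in> {0..<xf}" "0 \<in> {0..xf}" using xf by simp_all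
  then have R0: "0 < ?R0" and L0: "lot_size mu ?y0 ?R0 * Ns 0 = As 0"
    and U0: "indirect_utility mu ?y0 ?R0 = Ustar"
    using R_sub L_sub U_sub by fastforce+
  have y0: "0 < ?y0"
    using income_pos_of_lot_size[OF mu(1) R0 _ _ L0] sub_occ As \<open>0 \<in> {0..xf}\<close>
    by (simp add: less_imp_le)
  have Nd: "Nd = (1 / mu) * (w - alpha * Td) powr ((1 - mu) / mu) * ?y0 powr (- 1 / mu) * ?R0 * Ad"
    using equilibrium(1,2) down_occ rA U0 R0 by (intro population_of_equal_utility[OF mu y0]) simp_all
  have Ns: "\<forall>x\<in>{0..<xf}. Ns x = ?n x"
  proof
    fix x assume x: "x \<in> {0..<xf}"
    then have "indirect_utility mu (?y0 - alpha * tau * x) (rs x + rA) = indirect_utility mu ?y0 ?R0"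
      using U_sub U0 by simp
    then show "Ns x = ?n x"
      using population_of_equal_utility[OF mu y0 R_sub[OF x] R0 _ L_sub[OF x]] by blast
  qed
  have "indirect_utility mu (?y0 - alpha * tau * xf) rA = indirect_utility mu ?y0 ?R0"
    using U_sub[of xf] U0 xf boundary by simp
  then have "(?y0 - alpha * tau * xf) * rA powr (- mu) = ?y0 * ?R0 powr (- mu)"
    unfolding indirect_utility_eq_iff[OF mu] .
  then have xf_eq: "xf = ?y0 / (alpha * tau) * (rA powr (- mu) - ?R0 powr (- mu)) * rA powr mu"
    using alpha tau rA by (intro boundary_of_equal_utility) simp_all
  have I: "(Ns has_integral (N - Nd)) {0..xf}"
    using equilibrium(5) beyond by (rule has_integral_atLeastAtMost_of_vanishing)
  have "(?n has_integral (N - Nd)) {0..xf}"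
    by (rule has_integral_spike[OF negligible_sing[of xf] _ I]) (use Ns in auto)
  with Nd Ns xf_eq show ?thesis by simp
qed

end
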